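(* Let $\mathcal{W}_a$ be a finite set of assignment vectors in $\{0,1\}^n$, each with exactly $n_t$ ones (and $n_c=n-n_t\ge 1$ zeros, $n_t\ge 1$), and let $W^{\mathrm{obs}}\in\mathcal{W}_a$ be the observed assignment with observed outcomes $Y_i$ (so $Y_i=Y_i(1)$ if $W^{\mathrm{obs}}_i=1$ and $Y_i=Y_i(0)$ if $W^{\mathrm{obs}}_i=0$). For $\theta\in\mathbb{R}$ define the imputed outcomes under $H_0^\theta: Y_i(1)-Y_i(0)=\theta$ for all $i$ by $\widetilde Y_i(1)=Y_i,\ \widetilde Y_i(0)=Y_i-\theta$ if $W^{\mathrm{obs}}_i=1$ and $\widetilde Y_i(0)=Y_i,\ \widetilde Y_i(1)=Y_i+\theta$ if $W^{\mathrm{obs}}_i=0$, and for $w\in\mathcal{W}_a$ let $\widehat\tau(\mathbf{Y}^{\mathrm{imp}}_\theta,w)=n_t^{-1}\sum_{i:w_i=1}\widetilde Y_i(1)-n_c^{-1}\sum_{i:w_i=0}\widetilde Y_i(0)$. Let $p(\theta)=|\mathcal{W}_a|^{-1}\sum_{w\in\mathcal{W}_a}I\{\widehat\tau(\mathbf{Y}^{\mathrm{imp}}_\theta,w)\ge \widehat\tau(\mathbf{Y}^{\mathrm{imp}}_\theta,W^{\mathrm{obs}})\}$ and $\theta_l=\sup\{\theta:p(\theta)\le\alpha\}$ for a fixed $\alpha\in(0,1)$ (with $\sup\emptyset=-\infty$). Then: (a) for every $W^b\in\mathcal{W}_a$ with $W^b\ne W^{\mathrm{obs}}$, the equation $\widehat\tau(\mathbf{Y}^{\mathrm{imp}}_\theta,W^b)=\widehat\tau(\mathbf{Y}^{\mathrm{imp}}_\theta,W^{\mathrm{obs}})$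 in $\theta$ has the unique solution $$\theta_b=\frac{\sum_{i:W^{\mathrm{obs}}_i=1,W^b_i=0}Y_i(1)-\sum_{i:W^{\mathrm{obs}}_i=0,W^b_i=1}Y_i(0)}{\sum_{i=1}^n I\{W^{\mathrm{obs}}_i=1,W^b_i=0\}};$$ (b) setting $\theta_b=-\infty$ for $W^b=W^{\mathrm{obs}}$ and letting $\theta_{(1)}\le\cdots\le\theta_{(|\mathcal{W}_a|)}$ be the increasingly ordered values of $\theta_b$ over $W^b\in\mathcal{W}_a$, we have $\theta_l=\theta_{(\lfloor\alpha|\mathcal{W}_a|\rfloor+1)}$.
   Context: Potential outcomes framework: units $i=1,\dots,n$ have fixed potential outcomes $Y_i(1),Y_i(0)$; an assignment $W\in\{0,1\}^n$ has $W_i=1$ for treatment. $I\{\cdot\}$ denotes the indicator function and $\lfloor\cdot\rfloor$ the floor function. *)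

theory Defs
  imports Complex_Main "HOL-Library.Multiset" "HOL-Library.Extended_Real"
begin

(* Units are 0..<n. An assignment vector is a predicate w :: nat => bool
   (w i = True means W_i = 1), required to be False outside {0..<n}. *)

definition imp1 :: "(nat \<Rightarrow> bool) \<Rightarrow> (nat \<Rightarrow> real) \<Rightarrow> real \<Rightarrow> nat \<Rightarrow> real" where
  "imp1 Wobs Y \<theta> i = (if Wobs i then Y i else Y i + \<theta>)"

definition imp0 :: "(nat \<Rightarrow> bool) \<Rightarrow> (nat \<Rightarrow> real) \<Rightarrow> real \<Rightarrow> nat \<Rightarrow> real" where
  "imp0 Wobs Y \<theta> i = (if Wobs i then Y i - \<theta> else Y i)"

definition tau_hat :: "nat \<Rightarrow> nat \<Rightarrow> (nat \<Rightarrow> bool) \<Rightarrow> (nat \<Rightarrow> real) \<Rightarrow> real \<Rightarrow> (nat \<Rightarrow> bool) \<Rightarrow> real" where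
  "tau_hat n nt Wobs Y \<theta> w =
     (\<Sum>i\<in>{i. i < n \<and> w i}. imp1 Wobs Y \<theta> i) / real nt
   - (\<Sum>i\<in>{i. i < n \<and> \<not> w i}. imp0 Wobs Y \<theta> i) / real (n - nt)"

definition pval :: "nat \<Rightarrow> nat \<Rightarrow> (nat \<Rightarrow> bool) set \<Rightarrow> (nat \<Rightarrow> bool) \<Rightarrow> (nat \<Rightarrow> real) \<Rightarrow> real \<Rightarrow> real" where
  "pval n nt Wa Wobs Y \<theta> =
     real (card {w \<in> Wa. tau_hat n nt Wobs Y \<theta> w \<ge> tau_hat n nt Wobs Y \<theta> Wobs}) / real (card Wa)"

(* sup over the extended reals, so that Sup {} = -\<infinity> *)
definition theta_l :: "nat \<Rightarrow> nat \<Rightarrow> (nat \<Rightarrow> bool) set \<Rightarrow> (nat \<Rightarrow> bool) \<Rightarrow> (nat \<Rightarrow> real) \<Rightarrow> real \<Rightarrow> ereal" where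
  "theta_l n nt Wa Wobs Y \<alpha> = Sup (ereal ` {\<theta>. pval n nt Wa Wobs Y \<theta> \<le> \<alpha>})"

definition theta_b :: "nat \<Rightarrow> (nat \<Rightarrow> bool) \<Rightarrow> (nat \<Rightarrow> real) \<Rightarrow> (nat \<Rightarrow> real) \<Rightarrow> (nat \<Rightarrow> bool) \<Rightarrow> real" where
  "theta_b n Wobs Y1 Y0 Wb =
     ((\<Sum>i\<in>{i. i < n \<and> Wobs i \<and> \<not> Wb i}. Y1 i) - (\<Sum>i\<in>{i. i < n \<and> \<not> Wobs i \<and> Wb i}. Y0 i))
     / real (card {i. i < n \<and> Wobs i \<and> \<not> Wb i})"

definition theta_b_ext :: "nat \<Rightarrow> (nat \<Rightarrow> bool) \<Rightarrow> (nat \<Rightarrow> real) \<Rightarrow> (nat \<Rightarrow> real) \<Rightarrow> (nat \<Rightarrow> bool) \<Rightarrow> ereal" where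
  "theta_b_ext n Wobs Y1 Y0 Wb = (if Wb = Wobs then -\<infinity> else ereal (theta_b n Wobs Y1 Y0 Wb))"

definition order_stat :: "'a::linorder multiset \<Rightarrow> nat \<Rightarrow> 'a" where
  "order_stat M k = sorted_list_of_multiset M ! (k - 1)"

end

theory Submission
  imports Defs
begin

text \<open>Under the imputation for \<open>H\<^sub>0\<^sup>\<theta>\<close>, moving a unit from treatment to control
  changes the imputed outcomes it contributes by exactly \<open>\<theta>\<close>. Hence
  \<open>\<tau>(w) - \<tau>(W\<^sup>o\<^sup>b\<^sup>s)\<close> is an affine function of \<open>\<theta>\<close> with positive slope
  \<open>(1/n\<^sub>t + 1/n\<^sub>c) m\<close>, \<open>m\<close> the number of switched units, and it vanishes exactly at
  \<open>\<theta>\<^sub>b\<close>. So \<open>w\<close> is counted in \<open>p(\<theta>)\<close> iff \<open>\<theta>\<^sub>b \<le> \<theta>\<close>: the p-value is the empirical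
  distribution function of the \<open>\<theta>\<^sub>b\<close> at \<open>\<theta>\<close>, it is at most \<open>\<alpha>\<close> iff \<open>\<theta>\<close> lies strictly below
  the \<open>(\<lfloor>\<alpha> N\<rfloor> + 1)\<close>-th order statistic, and the supremum of those \<open>\<theta>\<close> is that order
  statistic.\<close>

lemma sum_diff_sym:
  assumes "finite S" "finite T"
  shows "sum f S - sum f T = sum f (S - T) - sum (f :: _ \<Rightarrow> 'b::ab_group_add) (T - S)"
  using sum.Int_Diff[OF assms(1), of f T] sum.Int_Diff[OF assms(2), of f S]
  by (simp add: Int_commute)

lemma card_Diff_sym_eq:
  assumes "finite S" "finite T" "card S = card T"
  shows "card (S - T) = card (T - S)"
  using card_le_sym_Diff[OF assms(1,2)] card_le_sym_Diff[OF assms(2,1)] assms(3) by simp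

context
  fixes n nt :: nat and w Wobs :: "nat \<Rightarrow> bool" and Y1 Y0 Y :: "nat \<Rightarrow> real"
  assumes card_w: "card {i. i < n \<and> w i} = nt"
    and card_obs: "card {i. i < n \<and> Wobs i} = nt"
    and Y_obs: "\<forall>i<n. Y i = (if Wobs i then Y1 i else Y0 i)"
begin

lemma card_switched_eq:
  "card {i. i < n \<and> Wobs i \<and> \<not> w i} = card {i. i < n \<and> \<not> Wobs i \<and> w i}"
proof -
  have "card ({i. i < n \<and> Wobs i} - {i. i < n \<and> w i}) = card ({i. i < n \<and> w i} - {i. i < n \<and> Wobs i})"
    by (rule card_Diff_sym_eq) (simp_all add: card_w card_obs)
  moreover have "{i. i < n \<and> Wobs i} - {i. i < n \<and> w i} = {i. i < n \<and> Wobs i \<and> \<not> w i}"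
    and "{i. i < n \<and> w i} - {i. i < n \<and> Wobs i} = {i. i < n \<and> \<not> Wobs i \<and> w i}"
    by auto
  ultimately show ?thesis by simp
qed

lemma card_switched_pos:
  assumes "\<forall>i. n \<le> i \<longrightarrow> \<not> w i" "\<forall>i. n \<le> i \<longrightarrow> \<not> Wobs i" "w \<noteq> Wobs"
  shows "0 < card {i. i < n \<and> Wobs i \<and> \<not> w i}"
proof (rule ccontr)
  assume "\<not> ?thesis"
  then have "card {i. i < n \<and> Wobs i \<and> \<not> w i} = 0" "card {i. i < n \<and> \<not> Wobs i \<and> w i} = 0"
    using card_switched_eq by simp_all
  then have "{i. i < n \<and> Wobs i \<and> \<not> w i} = {}" "{i. i < n \<and> \<not> Wobs i \<and> w i} = {}"
    by simp_all
  then have "w i = Wobs i" for i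
    using assms(1,2) by (cases "i < n") auto
  with assms(3) show False by blast
qed

text \<open>This also holds when no unit switches, where \<^const>\<open>theta_b\<close> divides by zero.\<close>

lemma card_mult_theta_b:
  "real (card {i. i < n \<and> Wobs i \<and> \<not> w i}) * theta_b n Wobs Y1 Y0 w
   = (\<Sum>i\<in>{i. i < n \<and> Wobs i \<and> \<not> w i}. Y1 i) - (\<Sum>i\<in>{i. i < n \<and> \<not> Wobs i \<and> w i}. Y0 i)"
proof (cases "card {i. i < n \<and> Wobs i \<and> \<not> w i} = 0")
  case True
  have "finite {i. i < n \<and> Wobs i \<and> \<not> w i}" "finite {i. i < n \<and> \<not> Wobs i \<and> w i}"
    by simp_all
  with True card_switched_eq
  have "{i. i < n \<and> Wobs i \<and> \<not> w i} = {}" "{i. i < n \<and> \<not> Wobs i \<and> w i} = {}"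
    by (metis card_0_eq)+
  then show ?thesis by (simp only:) simp
qed (simp add: theta_b_def)

lemma tau_hat_diff:
  "tau_hat n nt Wobs Y \<theta> w - tau_hat n nt Wobs Y \<theta> Wobs
   = (1 / real nt + 1 / real (n - nt)) * real (card {i. i < n \<and> Wobs i \<and> \<not> w i})
     * (\<theta> - theta_b n Wobs Y1 Y0 w)"
proof -
  define A where "A = {i. i < n \<and> Wobs i \<and> \<not> w i}"
  define B where "B = {i. i < n \<and> \<not> Wobs i \<and> w i}"
  define D where "D = real (card A) * \<theta> - ((\<Sum>i\<in>A. Y1 i) - (\<Sum>i\<in>B. Y0 i))"
  have "{i. i < n \<and> w i} - {i. i < n \<and> Wobs i} = B" "{i. i < n \<and> Wobs i} - {i. i < n \<and> w i} = A"
    "{i. i < n \<and> \<not> w i} - {i. i < n \<and> \<not> Wobs i} = A" "{i. i < n \<and> \<not> Wobs i} - {i. i < n \<and> \<not> w i} = B"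
    by (auto simp: A_def B_def)
  then have treated: "(\<Sum>i\<in>{i. i < n \<and> w i}. imp1 Wobs Y \<theta> i) - (\<Sum>i\<in>{i. i < n \<and> Wobs i}. imp1 Wobs Y \<theta> i)
                = sum (imp1 Wobs Y \<theta>) B - sum (imp1 Wobs Y \<theta>) A"
    and control: "(\<Sum>i\<in>{i. i < n \<and> \<not> w i}. imp0 Wobs Y \<theta> i) - (\<Sum>i\<in>{i. i < n \<and> \<not> Wobs i}. imp0 Wobs Y \<theta> i)
                = sum (imp0 Wobs Y \<theta>) A - sum (imp0 Wobs Y \<theta>) B"
    by (simp_all add: sum_diff_sym)
  have "sum (imp1 Wobs Y \<theta>) B = (\<Sum>i\<in>B. Y0 i) + real (card B) * \<theta>"
    by (simp add: sum.distrib B_def imp1_def Y_obs)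
  moreover have "sum (imp1 Wobs Y \<theta>) A = (\<Sum>i\<in>A. Y1 i)"
    by (rule sum.cong) (auto simp: A_def imp1_def Y_obs)
  ultimately have treated_D: "sum (imp1 Wobs Y \<theta>) B - sum (imp1 Wobs Y \<theta>) A = D"
    using card_switched_eq by (simp add: D_def A_def B_def)
  have "sum (imp0 Wobs Y \<theta>) A = (\<Sum>i\<in>A. Y1 i) - real (card A) * \<theta>"
    by (simp add: sum_subtractf A_def imp0_def Y_obs)
  moreover have "sum (imp0 Wobs Y \<theta>) B = (\<Sum>i\<in>B. Y0 i)"
    by (rule sum.cong) (auto simp: B_def imp0_def Y_obs)
  ultimately have control_D: "sum (imp0 Wobs Y \<theta>) A - sum (imp0 Wobs Y \<theta>) B = - D"
    by (simp add: D_def)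
  have "tau_hat n nt Wobs Y \<theta> w - tau_hat n nt Wobs Y \<theta> Wobs
        = ((\<Sum>i\<in>{i. i < n \<and> w i}. imp1 Wobs Y \<theta> i) - (\<Sum>i\<in>{i. i < n \<and> Wobs i}. imp1 Wobs Y \<theta> i)) / real nt
        - ((\<Sum>i\<in>{i. i < n \<and> \<not> w i}. imp0 Wobs Y \<theta> i) - (\<Sum>i\<in>{i. i < n \<and> \<not> Wobs i}. imp0 Wobs Y \<theta> i)) / real (n - nt)"
    unfolding tau_hat_def by (simp add: diff_divide_distrib)
  also have "\<dots> = D / real nt + D / real (n - nt)"
    unfolding treated control treated_D control_D by simp
  also have "D = real (card A) * (\<theta> - theta_b n Wobs Y1 Y0 w)"
    using card_mult_theta_b by (simp add: D_def A_def B_def right_diff_distrib)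
  finally show ?thesis by (simp add: A_def algebra_simps)
qed

lemma tau_hat_cmp_obs_iff:
  assumes "0 < nt" "nt < n" "\<forall>i. n \<le> i \<longrightarrow> \<not> w i" "\<forall>i. n \<le> i \<longrightarrow> \<not> Wobs i" "w \<noteq> Wobs"
  shows "tau_hat n nt Wobs Y \<theta> Wobs \<le> tau_hat n nt Wobs Y \<theta> w \<longleftrightarrow> theta_b n Wobs Y1 Y0 w \<le> \<theta>"
    and "tau_hat n nt Wobs Y \<theta> w = tau_hat n nt Wobs Y \<theta> Wobs \<longleftrightarrow> \<theta> = theta_b n Wobs Y1 Y0 w"
proof -
  have slope: "0 < (1 / real nt + 1 / real (n - nt)) * real (card {i. i < n \<and> Wobs i \<and> \<not> w i})"
    using assms card_switched_pos by (intro mult_pos_pos add_pos_pos) simp_all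
  show "tau_hat n nt Wobs Y \<theta> Wobs \<le> tau_hat n nt Wobs Y \<theta> w \<longleftrightarrow> theta_b n Wobs Y1 Y0 w \<le> \<theta>"
    using tau_hat_diff[of \<theta>] slope zero_le_mult_iff[of _ "\<theta> - theta_b n Wobs Y1 Y0 w"]
    by (smt (verit))
  show "tau_hat n nt Wobs Y \<theta> w = tau_hat n nt Wobs Y \<theta> Wobs \<longleftrightarrow> \<theta> = theta_b n Wobs Y1 Y0 w"
    using tau_hat_diff[of \<theta>] slope by (smt (verit) mult_eq_0_iff)
qed

end

lemma length_filter_le_sorted_iff:
  fixes L :: "'a::linorder list"
  assumes "sorted L" "k < length L"
  shows "length (filter (\<lambda>y. y \<le> x) L) \<le> k \<longleftrightarrow> x < L ! k"
proof -
  have count: "length (filter (\<lambda>y. y \<le> x) L) = card {j. j < length L \<and> L ! j \<le> x}"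
    by (rule length_filter_conv_card)
  show ?thesis
  proof
    assume "length (filter (\<lambda>y. y \<le> x) L) \<le> k"
    moreover have "{..k} \<subseteq> {j. j < length L \<and> L ! j \<le> x}" if "L ! k \<le> x"
      using assms that by (auto intro: order.trans sorted_nth_mono)
    then have "Suc k \<le> card {j. j < length L \<and> L ! j \<le> x}" if "L ! k \<le> x"
      using that card_mono[of _ "{..k}"] by fastforce
    ultimately show "x < L ! k" unfolding count by force
  next
    assume "x < L ! k"
    have "j < k" if "j < length L" "L ! j \<le> x" for j
    proof (rule ccontr)
      assume "\<not> j < k"
      then have "L ! k \<le> L ! j" using assms(1) that(1) by (simp add: sorted_nth_mono)
      with \<open>x < L ! k\<close> that(2) show False by simp
    qed
    then have "{j. j < length L \<and> L ! j \<le> x} \<subseteq> {..<k}" by blast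
    then show "length (filter (\<lambda>y. y \<le> x) L) \<le> k"
      unfolding count using card_mono[of "{..<k}"] by fastforce
  qed
qed

lemma size_filter_le_order_stat_iff:
  fixes M :: "'a::linorder multiset"
  assumes "k < size M"
  shows "size (filter_mset (\<lambda>y. y \<le> x) M) \<le> k \<longleftrightarrow> x < order_stat M (Suc k)"
proof -
  have "size (filter_mset (\<lambda>y. y \<le> x) M) = length (filter (\<lambda>y. y \<le> x) (sorted_list_of_multiset M))"
    by (metis mset_filter mset_sorted_list_of_multiset size_mset)
  moreover have "length (sorted_list_of_multiset M) = size M"
    by (metis mset_sorted_list_of_multiset size_mset)
  ultimately show ?thesis
    using assms by (simp add: order_stat_def length_filter_le_sorted_iff)
qed

lemma order_stat_in_mset:
  assumes "0 < k" "k \<le> size M"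
  shows "order_stat M k \<in># M"
proof -
  have "length (sorted_list_of_multiset M) = size M"
    by (metis mset_sorted_list_of_multiset size_mset)
  with assms have "order_stat M k \<in> set (sorted_list_of_multiset M)"
    unfolding order_stat_def by (intro nth_mem) simp
  then show ?thesis by simp
qed

lemma nat_floor_mult_less:
  assumes "0 < N" "\<alpha> < 1"
  shows "nat \<lfloor>\<alpha> * real N\<rfloor> < N"
proof -
  have "\<lfloor>\<alpha> * real N\<rfloor> < int N"
    using assms by (simp add: floor_less_iff)
  then show ?thesis using assms(1) by (simp add: nat_less_iff)
qed

lemma empirical_cdf_le_iff_less_order_stat:
  fixes M :: "'a::linorder multiset" and \<alpha> :: real
  assumes "M \<noteq> {#}" "0 \<le> \<alpha>" "\<alpha> < 1"
  shows "real (size (filter_mset (\<lambda>y. y \<le> x) M)) / real (size M) \<le> \<alpha>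
         \<longleftrightarrow> x < order_stat M (nat \<lfloor>\<alpha> * real (size M)\<rfloor> + 1)"
proof -
  define c where "c = size (filter_mset (\<lambda>y. y \<le> x) M)"
  have "0 < size M" using assms(1) by (simp add: nonempty_has_size)
  then have rank: "nat \<lfloor>\<alpha> * real (size M)\<rfloor> < size M"
    using assms(3) by (rule nat_floor_mult_less)
  have "real c / real (size M) \<le> \<alpha> \<longleftrightarrow> real c \<le> \<alpha> * real (size M)"
    using \<open>0 < size M\<close> by (simp add: divide_le_eq)
  also have "\<dots> \<longleftrightarrow> c \<le> nat \<lfloor>\<alpha> * real (size M)\<rfloor>"
    using assms(2) by (simp add: le_floor_iff le_nat_iff)
  also have "\<dots> \<longleftrightarrow> x < order_stat M (nat \<lfloor>\<alpha> * real (size M)\<rfloor> + 1)"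
    unfolding c_def using size_filter_le_order_stat_iff[OF rank] by simp
  finally show ?thesis by (simp add: c_def)
qed

lemma Sup_ereal_less:
  fixes t :: ereal
  assumes "t \<noteq> \<infinity>"
  shows "Sup (ereal ` {\<theta>. ereal \<theta> < t}) = t"
proof (cases t)
  case (real r)
  have "ereal ` {\<theta>. ereal \<theta> < t} = {-\<infinity><..<ereal r}"
  proof (rule set_eqI, rule iffI)
    fix x assume "x \<in> {-\<infinity><..<ereal r}"
    then show "x \<in> ereal ` {\<theta>. ereal \<theta> < t}" using real by (cases x) auto
  qed (use real in auto)
  then show ?thesis using real by (simp add: Sup_greaterThanLessThan)
next
  case MInf
  then show ?thesis by (simp add: bot_ereal_def)
qed (use assms in simp)

lemma Sup_empirical_cdf_le_eq_order_stat:
  fixes M :: "ereal multiset" and \<alpha> :: real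
  assumes "M \<noteq> {#}" "\<infinity> \<notin># M" "0 \<le> \<alpha>" "\<alpha> < 1"
  shows "Sup (ereal ` {\<theta>. real (size {#y \<in># M. y \<le> ereal \<theta>#}) / real (size M) \<le> \<alpha>})
         = order_stat M (nat \<lfloor>\<alpha> * real (size M)\<rfloor> + 1)"
proof -
  have "0 < size M" using assms(1) by (simp add: nonempty_has_size)
  then have "nat \<lfloor>\<alpha> * real (size M)\<rfloor> < size M"
    using assms(4) by (rule nat_floor_mult_less)
  then have "order_stat M (nat \<lfloor>\<alpha> * real (size M)\<rfloor> + 1) \<in># M"
    by (intro order_stat_in_mset) simp_all
  with assms(2) have "order_stat M (nat \<lfloor>\<alpha> * real (size M)\<rfloor> + 1) \<noteq> \<infinity>" by auto
  then show ?thesis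
    by (simp add: empirical_cdf_le_iff_less_order_stat[OF assms(1,3,4)] Sup_ereal_less)
qed

lemma card_filter_eq_size_filter_image_mset:
  "finite A \<Longrightarrow> card {a \<in> A. P (f a)} = size (filter_mset P (image_mset f (mset_set A)))"
  by (simp add: filter_mset_image_mset)

theorem theorem1:
  fixes n nt :: nat and Wa :: "(nat \<Rightarrow> bool) set" and Wobs :: "nat \<Rightarrow> bool"
    and Y1 Y0 Y :: "nat \<Rightarrow> real" and \<alpha> :: real
  assumes fin: "finite Wa"
    and nt_pos: "1 \<le> nt" and nc_pos: "nt < n"
    and supp: "\<forall>w\<in>Wa. \<forall>i. n \<le> i \<longrightarrow> \<not> w i"
    and ones: "\<forall>w\<in>Wa. card {i. i < n \<and> w i} = nt"
    and obs: "Wobs \<in> Wa"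
    and Yobs: "\<forall>i<n. Y i = (if Wobs i then Y1 i else Y0 i)"
    and alpha: "0 < \<alpha>" "\<alpha> < 1"
  shows "(\<forall>Wb\<in>Wa. Wb \<noteq> Wobs \<longrightarrow>
            {\<theta>. tau_hat n nt Wobs Y \<theta> Wb = tau_hat n nt Wobs Y \<theta> Wobs} = {theta_b n Wobs Y1 Y0 Wb})
       \<and> theta_l n nt Wa Wobs Y \<alpha> =
            order_stat (image_mset (theta_b_ext n Wobs Y1 Y0) (mset_set Wa))
                       (nat \<lfloor>\<alpha> * real (card Wa)\<rfloor> + 1)"
proof -
  have cmp_Wa: "(tau_hat n nt Wobs Y \<theta> Wobs \<le> tau_hat n nt Wobs Y \<theta> Wb \<longleftrightarrow> theta_b n Wobs Y1 Y0 Wb \<le> \<theta>)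
      \<and> (tau_hat n nt Wobs Y \<theta> Wb = tau_hat n nt Wobs Y \<theta> Wobs \<longleftrightarrow> \<theta> = theta_b n Wobs Y1 Y0 Wb)"
    if "Wb \<in> Wa" "Wb \<noteq> Wobs" for Wb \<theta>
  proof -
    have "\<forall>i. n \<le> i \<longrightarrow> \<not> Wb i" "\<forall>i. n \<le> i \<longrightarrow> \<not> Wobs i"
      using supp that obs by blast+
    then show ?thesis
      using tau_hat_cmp_obs_iff[of n Wb nt Wobs Y Y1 Y0 \<theta>] that ones obs Yobs nt_pos nc_pos by simp
  qed
  define M where "M = image_mset (theta_b_ext n Wobs Y1 Y0) (mset_set Wa)"
  have size_M: "size M = card Wa" and "M \<noteq> {#}" and "\<infinity> \<notin># M"
    using fin obs by (auto simp: M_def mset_set_empty_iff theta_b_ext_def)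
  have "{w \<in> Wa. tau_hat n nt Wobs Y \<theta> w \<ge> tau_hat n nt Wobs Y \<theta> Wobs}
        = {w \<in> Wa. theta_b_ext n Wobs Y1 Y0 w \<le> ereal \<theta>}" for \<theta>
    using cmp_Wa by (auto simp: theta_b_ext_def)
  moreover have "card {w \<in> Wa. theta_b_ext n Wobs Y1 Y0 w \<le> ereal \<theta>} = size {#y \<in># M. y \<le> ereal \<theta>#}"
    for \<theta> unfolding M_def by (rule card_filter_eq_size_filter_image_mset[OF fin])
  ultimately have pval: "pval n nt Wa Wobs Y \<theta> = real (size {#y \<in># M. y \<le> ereal \<theta>#}) / real (size M)"
    for \<theta> by (simp add: pval_def size_M)
  have "theta_l n nt Wa Wobs Y \<alpha> = order_stat M (nat \<lfloor>\<alpha> * real (size M)\<rfloor> + 1)"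
    unfolding theta_l_def pval
    by (rule Sup_empirical_cdf_le_eq_order_stat) (use \<open>M \<noteq> {#}\<close> \<open>\<infinity> \<notin># M\<close> alpha in simp_all)
  then show ?thesis
    using cmp_Wa by (auto simp: M_def size_M)
qed

end
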